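(* Let $n\ge 1$, $r\ge 1$, $0\le p_0,\ldots,p_{r-1}\le n-1$, and put $p_r=-1$. The LOG group of $\Gamma(n;a_{n-p_0}a_{n-p_1}\cdots a_{n-p_{r-1}})$ has the presentation \[\Big\langle a,c\ \Big|\ \Big(\prod_{i=0}^{r-1}ac^{p_{i+1}-p_i}\Big)^{-1}c\Big(\prod_{i=0}^{r-1}ac^{p_{i+1}-p_i}\Big)a^{-1},\ [a,c^n]\Big\rangle\] and is isomorphic to the natural HNN extension $\widehat{G}_n(w)$ of the cyclically presented group $G_n(w)$ with \[w=(x_{p_0}x_{p_1+1}\cdots x_{p_{r-1}+(r-1)}x_{p_r+r})(x_{p_0+1}x_{p_1+2}\cdots x_{p_{r-1}+r})^{-1}\] (subscripts mod $n$).
   Context: The LOG $\Gamma(n;v)$ for a word $v=a_{n-p_0}^{\delta_0}\cdots a_{n-p_{r-1}}^{\delta_{r-1}}$ (here all $\delta_j=1$) has LOG presentation \[\langle a_1,\ldots,a_n,t_0,\ldots,t_{r-1}\mid a_{i+1}=t_0^{-1}a_it_0\ (1\le i\le n,\ a_{n+1}=a_1),\ t_{j+1}=a_{n-p_j}^{-\delta_j}t_j a_{n-p_j}^{\delta_j}\ (0\le j\le r-1,\ t_r=a_1)\rangle;\] the group it defines is the LOG group. For $w\in F_n=F(x_1,\ldots,x_n)$, $G_n(w)=\langle x_1,\ldots,x_n\mid w,\theta(w),\ldots,\theta^{n-1}(w)\rangle$ where $\theta(x_i)=x_{i+1}$ (subscripts mod $n$), and the natural HNN extension is $\widehat{G}_n(w)=G_n(w)\rtimes_\phi\mathbb{Z}$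 where $\phi$ is the automorphism induced by $\theta$. *)

theory Defs
  imports "HOL-Algebra.Group"
begin

text \<open>A word over generators of type 'a is a list of letters (x, True) = x and
  (x, False) = x^-1.\<close>

type_synonym 'a word = "('a \<times> bool) list"

definition words :: "'a set \<Rightarrow> 'a word set" where
  "words X = {w. set w \<subseteq> X \<times> UNIV}"

definition winv :: "'a word \<Rightarrow> 'a word" where
  "winv w = rev (map (\<lambda>(x, b). (x, \<not> b)) w)"

definition gen :: "'a \<Rightarrow> 'a word" where
  "gen x = [(x, True)]"

definition genpow :: "'a \<Rightarrow> int \<Rightarrow> 'a word" where
  "genpow x k = (if 0 \<le> k then replicate (nat k) (x, True) else replicate (nat (- k)) (x, False))"

definition releq :: "'a word \<Rightarrow> 'a word \<Rightarrow> 'a word" where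
  "releq l r = l @ winv r"

inductive_set pres_rel :: "'a set \<Rightarrow> 'a word set \<Rightarrow> ('a word \<times> 'a word) set"
  for X R where
  prefl: "w \<in> words X \<Longrightarrow> (w, w) \<in> pres_rel X R"
| psym: "(u, v) \<in> pres_rel X R \<Longrightarrow> (v, u) \<in> pres_rel X R"
| ptrans: "(u, v) \<in> pres_rel X R \<Longrightarrow> (v, w) \<in> pres_rel X R \<Longrightarrow> (u, w) \<in> pres_rel X R"
| pfree: "u \<in> words X \<Longrightarrow> v \<in> words X \<Longrightarrow> x \<in> X \<Longrightarrow>
     (u @ [(x, b), (x, \<not> b)] @ v, u @ v) \<in> pres_rel X R"
| prel: "u \<in> words X \<Longrightarrow> v \<in> words X \<Longrightarrow> r \<in> R \<Longrightarrow> r \<in> words X \<Longrightarrow>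
     (u @ r @ v, u @ v) \<in> pres_rel X R"

definition pres_group :: "'a set \<Rightarrow> 'a word set \<Rightarrow> 'a word set monoid" where
  "pres_group X R =
     \<lparr> carrier = words X // pres_rel X R,
       mult = (\<lambda>A B. \<Union>a\<in>A. \<Union>b\<in>B. pres_rel X R `` {a @ b}),
       one = pres_rel X R `` {[]} \<rparr>"

section \<open>The LOG group of Gamma(n; a_{n-p_0} ... a_{n-p_{r-1}}) (all delta_j = 1)\<close>

text \<open>Generators: Inl i is a_i (1 <= i <= n), Inr j is t_j (0 <= j <= r-1).
  The word v is given by the list ps = [p_0, ..., p_{r-1}].\<close>

definition LOG_gens :: "nat \<Rightarrow> nat list \<Rightarrow> (nat + nat) set" where
  "LOG_gens n ps = Inl ` {1..n} \<union> Inr ` {..<length ps}"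

definition LOG_a :: "nat \<Rightarrow> nat \<Rightarrow> (nat + nat) word" where
  "LOG_a n i = gen (Inl (if i = n + 1 then 1 else i))"   \<comment> \<open>a_{n+1} = a_1\<close>

definition LOG_t :: "nat list \<Rightarrow> nat \<Rightarrow> (nat + nat) word" where
  "LOG_t ps j = (if j = length ps then gen (Inl 1) else gen (Inr j))"  \<comment> \<open>t_r = a_1\<close>

definition LOG_rels :: "nat \<Rightarrow> nat list \<Rightarrow> (nat + nat) word set" where
  "LOG_rels n ps =
     {releq (LOG_a n (i + 1)) (winv (LOG_t ps 0) @ LOG_a n i @ LOG_t ps 0) | i. 1 \<le> i \<and> i \<le> n}
   \<union> {releq (LOG_t ps (j + 1))
        (winv (LOG_a n (n - ps ! j)) @ LOG_t ps j @ LOG_a n (n - ps ! j)) | j. j < length ps}"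

definition LOG_group :: "nat \<Rightarrow> nat list \<Rightarrow> (nat + nat) word set monoid" where
  "LOG_group n ps = pres_group (LOG_gens n ps) (LOG_rels n ps)"

datatype gac = GA | GC

definition pext :: "nat list \<Rightarrow> nat \<Rightarrow> int" where
  "pext ps i = (if i < length ps then int (ps ! i) else -1)"

definition AC_U :: "nat list \<Rightarrow> gac word" where
  "AC_U ps = concat (map (\<lambda>i. gen GA @ genpow GC (pext ps (i + 1) - pext ps i)) [0..<length ps])"

definition AC_rels :: "nat \<Rightarrow> nat list \<Rightarrow> gac word set" where
  "AC_rels n ps =
     { winv (AC_U ps) @ gen GC @ AC_U ps @ winv (gen GA),
       winv (gen GA) @ genpow GC (- int n) @ gen GA @ genpow GC (int n) }"

definition AC_group :: "nat \<Rightarrow> nat list \<Rightarrow> gac word set monoid" where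
  "AC_group n ps = pres_group UNIV (AC_rels n ps)"

text \<open>Generators x_0, ..., x_{n-1} (subscripts mod n, so x_n = x_0).
  shift n k realises theta^k (k an integer).\<close>
definition shift :: "nat \<Rightarrow> int \<Rightarrow> nat word \<Rightarrow> nat word" where
  "shift n k w = map (\<lambda>(x, b). (nat ((int x + k) mod int n), b)) w"

definition cyc_rels :: "nat \<Rightarrow> nat word \<Rightarrow> nat word set" where
  "cyc_rels n w = {shift n (int k) w | k. k < n}"

definition cyc_group :: "nat \<Rightarrow> nat word \<Rightarrow> nat word set monoid" where
  "cyc_group n w = pres_group {..<n} (cyc_rels n w)"

text \<open>The automorphism phi^k of G_n(w) induced by theta^k (acting on classes).\<close>
definition cyc_phi :: "nat \<Rightarrow> nat word \<Rightarrow> int \<Rightarrow> nat word set \<Rightarrow> nat word set" where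
  "cyc_phi n w k A = (\<Union>u\<in>A. pres_rel {..<n} (cyc_rels n w) `` {shift n k u})"

text \<open>Natural HNN extension G_n(w) \<rtimes>_phi Z: pairs (g, m) with
  (g, m)(h, k) = (g phi^m(h), m + k).\<close>
definition cyc_hnn :: "nat \<Rightarrow> nat word \<Rightarrow> (nat word set \<times> int) monoid" where
  "cyc_hnn n w =
     \<lparr> carrier = carrier (cyc_group n w) \<times> UNIV,
       mult = (\<lambda>(g, m) (h, k). (g \<otimes>\<^bsub>cyc_group n w\<^esub> cyc_phi n w m h, m + k)),
       one = (\<one>\<^bsub>cyc_group n w\<^esub>, 0) \<rparr>"

definition xg :: "nat \<Rightarrow> int \<Rightarrow> nat word" where
  "xg n i = gen (nat (i mod int n))"

definition cor_w :: "nat \<Rightarrow> nat list \<Rightarrow> nat word" where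
  "cor_w n ps =
     concat (map (\<lambda>i. xg n (pext ps i + int i)) [0..<length ps + 1])
     @ winv (concat (map (\<lambda>i. xg n (pext ps i + int i + 1)) [0..<length ps]))"

end

theory Submission
  imports Defs
begin

text \<open>
  The LOG group, the two-generator group <a, c | U^-1 c U a^-1, [a, c^n]>
  with U = prod_i a c^(p_(i+1) - p_i), and the natural HNN extension G_n(w) x| Z all
  contain elements a, c satisfying [a, c^n] = 1 and c U = U a.  In any group such a
  pair determines chi_k = c^k a c^(-k-1), which depends only on k mod n, and a
  telescoping computation shows that c U = U a is equivalent to w(chi_0, ..., chi_(n-1)) = 1.
  Similarly a_i |-> c^-(i-1) a c^(i-1) together with suitable conjugates of c for the
  t_j satisfy the LOG relations, and the LOG relations force exactly these values.
\<close>

section \<open>Words and finitely presented groups\<close>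

lemma words_append [simp]: "u @ v \<in> words X \<longleftrightarrow> u \<in> words X \<and> v \<in> words X"
  by (auto simp: words_def)

lemma words_Cons [simp]: "l # v \<in> words X \<longleftrightarrow> fst l \<in> X \<and> v \<in> words X"
  by (cases l) (auto simp: words_def)

lemma words_Nil [simp]: "[] \<in> words X"
  by (simp add: words_def)

lemma words_UNIV [simp]: "w \<in> words UNIV"
  by (simp add: words_def)

lemma words_concat [simp]: "concat ws \<in> words X \<longleftrightarrow> (\<forall>w\<in>set ws. w \<in> words X)"
  by (auto simp: words_def)

lemma gen_words [simp]: "gen x \<in> words X \<longleftrightarrow> x \<in> X"
  by (simp add: gen_def)

lemma winv_Nil [simp]: "winv [] = []"
  by (simp add: winv_def)

lemma winv_Cons [simp]: "winv ((x, b) # w) = winv w @ [(x, \<not> b)]"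
  by (simp add: winv_def)

lemma winv_winv [simp]: "winv (winv w) = w"
  by (induction w) (auto simp: winv_def)

lemma winv_words [simp]: "winv w \<in> words X \<longleftrightarrow> w \<in> words X"
  by (auto simp: words_def winv_def)

lemma pres_rel_words: "(u, v) \<in> pres_rel X R \<Longrightarrow> u \<in> words X \<and> v \<in> words X"
  by (induction rule: pres_rel.induct) auto

lemma pres_rel_append_left:
  "(u, v) \<in> pres_rel X R \<Longrightarrow> w \<in> words X \<Longrightarrow> (w @ u, w @ v) \<in> pres_rel X R"
proof (induction rule: pres_rel.induct)
  case (pfree u v x b)
  then show ?case using pres_rel.pfree[of "w @ u" X v x b R] by simp
next
  case (prel u v r)
  then show ?case using pres_rel.prel[of "w @ u" X v r R] by simp
qed (auto intro: pres_rel.intros)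

lemma pres_rel_append_right:
  "(u, v) \<in> pres_rel X R \<Longrightarrow> w \<in> words X \<Longrightarrow> (u @ w, v @ w) \<in> pres_rel X R"
proof (induction rule: pres_rel.induct)
  case (pfree u v x b)
  then show ?case using pres_rel.pfree[of u X "v @ w" x b R] by simp
next
  case (prel u v r)
  then show ?case using pres_rel.prel[of u X "v @ w" r R] by simp
qed (auto intro: pres_rel.intros)

text \<open>The relation is a congruence for concatenation, which is what makes
  the multiplication of classes well defined.\<close>
lemma pres_rel_append:
  "(u, v) \<in> pres_rel X R \<Longrightarrow> (u', v') \<in> pres_rel X R \<Longrightarrow> (u @ u', v @ v') \<in> pres_rel X R"
  by (meson pres_rel.ptrans pres_rel_append_left pres_rel_append_right pres_rel_words)

lemma pres_rel_equiv: "equiv (words X) (pres_rel X R)"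
  unfolding equiv_def refl_on_def sym_def trans_def
  using pres_rel_words by (auto intro: pres_rel.intros)

lemma pres_rel_cancel: "w \<in> words X \<Longrightarrow> (w @ winv w, []) \<in> pres_rel X R"
proof (induction w)
  case Nil
  then show ?case by (simp add: pres_rel.prefl)
next
  case (Cons l w)
  obtain x b where l: "l = (x, b)" by (cases l)
  have x: "x \<in> X" "w \<in> words X" using Cons l by auto
  have "([(x, b)] @ (w @ winv w) @ [(x, \<not> b)], [(x, b)] @ [] @ [(x, \<not> b)]) \<in> pres_rel X R"
    using Cons x by (intro pres_rel_append pres_rel.prefl) auto
  moreover have "([] @ [(x, b), (x, \<not> b)] @ [], [] @ []) \<in> pres_rel X R"
    using x by (intro pres_rel.pfree) auto
  ultimately show ?case using l by (auto intro: pres_rel.ptrans)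
qed

lemma pres_rel_cancel': "w \<in> words X \<Longrightarrow> (winv w @ w, []) \<in> pres_rel X R"
  using pres_rel_cancel[of "winv w" X R] by simp

lemma pres_rel_relator: "r \<in> R \<Longrightarrow> r \<in> words X \<Longrightarrow> (r, []) \<in> pres_rel X R"
  using pres_rel.prel[of "[]" X "[]" r R] by simp

definition cls :: "'a set \<Rightarrow> 'a word set \<Rightarrow> 'a word \<Rightarrow> 'a word set" where
  "cls X R w = pres_rel X R `` {w}"

lemma cls_eqI: "(u, v) \<in> pres_rel X R \<Longrightarrow> cls X R u = cls X R v"
  unfolding cls_def using equiv_class_eq[OF pres_rel_equiv] by blast

lemma cls_self: "w \<in> words X \<Longrightarrow> w \<in> cls X R w"
  by (simp add: cls_def pres_rel.prefl)

lemma cls_carrier: "w \<in> words X \<Longrightarrow> cls X R w \<in> carrier (pres_group X R)"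
  by (simp add: cls_def pres_group_def quotientI)

lemma carrier_cls: "A \<in> carrier (pres_group X R) \<Longrightarrow> \<exists>w\<in>words X. A = cls X R w"
  by (auto simp: cls_def pres_group_def quotient_def)

lemma cls_mult:
  assumes "u \<in> words X" and "v \<in> words X"
  shows "cls X R u \<otimes>\<^bsub>pres_group X R\<^esub> cls X R v = cls X R (u @ v)"
proof -
  have "pres_rel X R `` {u' @ v'} = cls X R (u @ v)" if "u' \<in> cls X R u" "v' \<in> cls X R v" for u' v'
    using that unfolding cls_def[symmetric]
    by (metis Image_singleton_iff cls_def cls_eqI pres_rel.psym pres_rel_append)
  moreover have "u \<in> cls X R u" "v \<in> cls X R v" using assms by (auto simp: cls_self)
  ultimately show ?thesis unfolding pres_group_def by auto
qed

lemma cls_one: "\<one>\<^bsub>pres_group X R\<^esub> = cls X R []"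
  by (simp add: pres_group_def cls_def)

theorem pres_group_group: "group (pres_group X R)"
proof (rule groupI)
  let ?G = "pres_group X R"
  fix x y z assume "x \<in> carrier ?G" "y \<in> carrier ?G" "z \<in> carrier ?G"
  then obtain u v w where "u \<in> words X" "x = cls X R u" "v \<in> words X" "y = cls X R v"
    "w \<in> words X" "z = cls X R w"
    using carrier_cls by metis
  then show "x \<otimes>\<^bsub>?G\<^esub> y \<in> carrier ?G" and "x \<otimes>\<^bsub>?G\<^esub> y \<otimes>\<^bsub>?G\<^esub> z = x \<otimes>\<^bsub>?G\<^esub> (y \<otimes>\<^bsub>?G\<^esub> z)"
    by (simp_all add: cls_mult cls_carrier)
next
  show "\<one>\<^bsub>pres_group X R\<^esub> \<in> carrier (pres_group X R)"
    by (simp add: cls_one cls_carrier)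
next
  fix x assume "x \<in> carrier (pres_group X R)"
  then obtain u where u: "u \<in> words X" "x = cls X R u" using carrier_cls by metis
  then show "\<one>\<^bsub>pres_group X R\<^esub> \<otimes>\<^bsub>pres_group X R\<^esub> x = x"
    by (simp add: cls_one cls_mult)
  have "cls X R (winv u) \<otimes>\<^bsub>pres_group X R\<^esub> x = \<one>\<^bsub>pres_group X R\<^esub>"
    using u by (simp add: cls_mult cls_one cls_eqI pres_rel_cancel')
  then show "\<exists>y\<in>carrier (pres_group X R). y \<otimes>\<^bsub>pres_group X R\<^esub> x = \<one>\<^bsub>pres_group X R\<^esub>"
    using u by (metis cls_carrier winv_words)
qed

lemma cls_inv: "w \<in> words X \<Longrightarrow> inv\<^bsub>pres_group X R\<^esub> (cls X R w) = cls X R (winv w)"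
proof -
  assume w: "w \<in> words X"
  interpret group "pres_group X R" by (rule pres_group_group)
  have "cls X R (winv w) \<otimes>\<^bsub>pres_group X R\<^esub> cls X R w = \<one>\<^bsub>pres_group X R\<^esub>"
    using w by (simp add: cls_mult cls_one cls_eqI pres_rel_cancel')
  then show ?thesis using w by (simp add: inv_equality cls_carrier)
qed

lemma cls_relator: "r \<in> R \<Longrightarrow> r \<in> words X \<Longrightarrow> cls X R r = \<one>\<^bsub>pres_group X R\<^esub>"
  by (simp add: cls_one cls_eqI pres_rel_relator)

lemma cls_releq:
  assumes "releq l r \<in> R" and l: "l \<in> words X" and r: "r \<in> words X"
  shows "cls X R l = cls X R r"
proof -
  have "(l @ winv r @ r, l) \<in> pres_rel X R"
    using pres_rel_append[OF pres_rel.prefl[OF l] pres_rel_cancel'[OF r]] by simp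
  moreover have "(l @ winv r @ r, r) \<in> pres_rel X R"
    using pres_rel_append[OF pres_rel_relator[OF assms(1)] pres_rel.prefl[OF r]] l r
    by (simp add: releq_def)
  ultimately show ?thesis by (metis cls_eqI)
qed

section \<open>Products and evaluation of words in a group\<close>

definition gprod :: "('b, 'c) monoid_scheme \<Rightarrow> ('i \<Rightarrow> 'b) \<Rightarrow> 'i list \<Rightarrow> 'b" where
  "gprod K F xs = foldr (\<lambda>i acc. F i \<otimes>\<^bsub>K\<^esub> acc) xs \<one>\<^bsub>K\<^esub>"

lemma gprod_Nil [simp]: "gprod K F [] = \<one>\<^bsub>K\<^esub>"
  by (simp add: gprod_def)

lemma gprod_Cons [simp]: "gprod K F (x # xs) = F x \<otimes>\<^bsub>K\<^esub> gprod K F xs"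
  by (simp add: gprod_def)

lemma (in group) gprod_closed [simp]:
  "(\<And>i. i \<in> set xs \<Longrightarrow> F i \<in> carrier G) \<Longrightarrow> gprod G F xs \<in> carrier G"
  by (induction xs) auto

lemma (in group) gprod_snoc:
  "(\<And>i. i \<in> set xs \<Longrightarrow> F i \<in> carrier G) \<Longrightarrow> F x \<in> carrier G \<Longrightarrow>
   gprod G F (xs @ [x]) = gprod G F xs \<otimes> F x"
  by (induction xs) (auto simp: m_assoc)

lemma (in group) gprod_cong: "(\<And>i. i \<in> set xs \<Longrightarrow> F i = F' i) \<Longrightarrow> gprod G F xs = gprod G F' xs"
  by (induction xs) auto

lemma gprod_hom:
  assumes "group_hom G H h" and "\<And>i. i \<in> set xs \<Longrightarrow> F i \<in> carrier G"
  shows "h (gprod G F xs) = gprod H (\<lambda>i. h (F i)) xs"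
proof -
  interpret group_hom G H h by (rule assms(1))
  show ?thesis using assms(2) by (induction xs) auto
qed

lemma (in group) inv_mult_cancel [simp]:
  "x \<in> carrier G \<Longrightarrow> y \<in> carrier G \<Longrightarrow> inv x \<otimes> (x \<otimes> y) = y"
  by (simp add: m_assoc[symmetric])

lemma (in group) mult_inv_cancel [simp]:
  "x \<in> carrier G \<Longrightarrow> y \<in> carrier G \<Longrightarrow> x \<otimes> (inv x \<otimes> y) = y"
  by (simp add: m_assoc[symmetric])

lemma (in group) commutes_inv:
  assumes "x \<otimes> z = z \<otimes> x" "x \<in> carrier G" "z \<in> carrier G"
  shows "x \<otimes> inv z = inv z \<otimes> x"
proof -
  have "x \<otimes> inv z = inv z \<otimes> (z \<otimes> x) \<otimes> inv z" using assms by (simp add: m_assoc)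
  also have "\<dots> = inv z \<otimes> x" using assms by (simp flip: assms(1) add: m_assoc)
  finally show ?thesis .
qed

lemma (in group) int_pow_commutes:
  assumes "x \<otimes> y = y \<otimes> x" "x \<in> carrier G" "y \<in> carrier G"
  shows "x \<otimes> y [^] (d::int) = y [^] d \<otimes> x"
proof (cases d rule: int_cases)
  case (nonneg k)
  then show ?thesis using group_commutes_pow[of y x k] assms by (simp add: int_pow_int)
next
  case (neg k)
  have "x \<otimes> y [^] Suc k = y [^] Suc k \<otimes> x"
    using group_commutes_pow[of y x "Suc k"] assms by simp
  then show ?thesis using neg assms commutes_inv[of x "y [^] Suc k"]
    by (simp add: int_pow_neg_int del: of_nat_Suc)
qed

definition evalw :: "('b, 'c) monoid_scheme \<Rightarrow> ('a \<Rightarrow> 'b) \<Rightarrow> 'a word \<Rightarrow> 'b" where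
  "evalw H f w = foldr (\<lambda>(x, b) acc. (if b then f x else inv\<^bsub>H\<^esub> (f x)) \<otimes>\<^bsub>H\<^esub> acc) w \<one>\<^bsub>H\<^esub>"

lemma evalw_Nil [simp]: "evalw H f [] = \<one>\<^bsub>H\<^esub>"
  by (simp add: evalw_def)

lemma evalw_Cons [simp]:
  "evalw H f ((x, b) # w) = (if b then f x else inv\<^bsub>H\<^esub> (f x)) \<otimes>\<^bsub>H\<^esub> evalw H f w"
  by (simp add: evalw_def)

lemma evalw_cong: "(\<And>x. x \<in> X \<Longrightarrow> f x = g x) \<Longrightarrow> w \<in> words X \<Longrightarrow> evalw H f w = evalw H g w"
  by (induction w) auto

lemma evalw_rename: "evalw H f (map (\<lambda>(x, b). (\<sigma> x, b)) w) = evalw H (\<lambda>x. f (\<sigma> x)) w"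
  by (induction w) auto

locale word_eval = group H for H (structure) +
  fixes f :: "'a \<Rightarrow> 'b" and X :: "'a set"
  assumes f_closed: "x \<in> X \<Longrightarrow> f x \<in> carrier H"
begin

lemma evalw_closed [simp]: "w \<in> words X \<Longrightarrow> evalw H f w \<in> carrier H"
  by (induction w) (auto simp: f_closed)

lemma evalw_append: "u \<in> words X \<Longrightarrow> v \<in> words X \<Longrightarrow> evalw H f (u @ v) = evalw H f u \<otimes> evalw H f v"
  by (induction u) (auto simp: f_closed m_assoc)

lemma evalw_gen [simp]: "x \<in> X \<Longrightarrow> evalw H f (gen x) = f x"
  using f_closed by (simp add: gen_def)

lemma evalw_winv: "w \<in> words X \<Longrightarrow> evalw H f (winv w) = inv (evalw H f w)"
proof (induction w)
  case (Cons l w)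
  obtain x b where l: "l = (x, b)" by (cases l)
  then have x: "f x \<in> carrier H" "w \<in> words X" using Cons f_closed by auto
  then show ?case using Cons l by (simp add: evalw_append inv_mult_group)
qed simp

lemma evalw_concat:
  "(\<And>i. i \<in> set xs \<Longrightarrow> g i \<in> words X) \<Longrightarrow>
   evalw H f (concat (map g xs)) = gprod H (\<lambda>i. evalw H f (g i)) xs"
  by (induction xs) (auto simp: evalw_append)

lemma evalw_genpow: "x \<in> X \<Longrightarrow> evalw H f (genpow x k) = f x [^] k"
proof -
  assume x: "x \<in> X"
  note fx = f_closed[OF x]
  have pos: "evalw H f (replicate m (x, True)) = f x [^] m" for m
    using fx by (induction m) (simp_all add: group_commutes_pow)
  have neg: "evalw H f (replicate m (x, False)) = inv f x [^] m" for m
    using fx by (induction m) (simp_all add: group_commutes_pow)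
  show ?thesis
  proof (cases "0 \<le> k")
    case True
    then have "f x [^] k = f x [^] (nat k)" by (metis int_nat_eq int_pow_int)
    then show ?thesis using True pos by (simp add: genpow_def)
  next
    case False
    then have "f x [^] k = inv (f x [^] (nat (- k)))" unfolding int_pow_def2 by simp
    then show ?thesis using False neg fx nat_pow_inv by (simp add: genpow_def)
  qed
qed

lemma evalw_conj:
  assumes g: "g \<in> carrier H" and "w \<in> words X"
  shows "evalw H (\<lambda>x. g \<otimes> f x \<otimes> inv g) w = g \<otimes> evalw H f w \<otimes> inv g"
  using assms(2)
proof (induction w)
  case (Cons l w)
  obtain x b where l: "l = (x, b)" by (cases l)
  then have x: "f x \<in> carrier H" "w \<in> words X" using Cons f_closed by auto
  have "inv (g \<otimes> f x \<otimes> inv g) = g \<otimes> inv (f x) \<otimes> inv g"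
    using g x by (simp add: inv_mult_group m_assoc)
  then show ?case using Cons l g x by (simp add: m_assoc)
qed (simp add: g)

lemma evalw_respects:
  assumes R: "\<And>r. r \<in> R \<Longrightarrow> r \<in> words X \<Longrightarrow> evalw H f r = \<one>"
  shows "(u, v) \<in> pres_rel X R \<Longrightarrow> evalw H f u = evalw H f v"
proof (induction rule: pres_rel.induct)
  case (pfree u v x b)
  then have "f x \<in> carrier H" by (simp add: f_closed)
  then show ?case using pfree by (cases b) (simp_all add: evalw_append m_assoc[symmetric])
next
  case (prel u v r)
  then show ?case by (simp add: evalw_append R)
qed auto

definition induced :: "'a word set \<Rightarrow> 'a word set \<Rightarrow> 'b" where
  "induced R A = evalw H f (SOME w. w \<in> A)"

lemma induced_cls:
  assumes R: "\<And>r. r \<in> R \<Longrightarrow> r \<in> words X \<Longrightarrow> evalw H f r = \<one>" and w: "w \<in> words X"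
  shows "induced R (cls X R w) = evalw H f w"
proof -
  have "(SOME u. u \<in> cls X R w) \<in> cls X R w" using w cls_self by (metis someI)
  then have "(w, SOME u. u \<in> cls X R w) \<in> pres_rel X R" by (simp add: cls_def)
  then show ?thesis unfolding induced_def using evalw_respects[OF R] by metis
qed

lemma induced_hom:
  assumes R: "\<And>r. r \<in> R \<Longrightarrow> r \<in> words X \<Longrightarrow> evalw H f r = \<one>"
  shows "induced R \<in> hom (pres_group X R) H"
proof (rule homI)
  fix A assume "A \<in> carrier (pres_group X R)"
  then obtain w where "w \<in> words X" "A = cls X R w" using carrier_cls by metis
  then show "induced R A \<in> carrier H" using induced_cls[OF R] by simp
next
  fix A B assume "A \<in> carrier (pres_group X R)" "B \<in> carrier (pres_group X R)"
  then obtain u v where "u \<in> words X" "A = cls X R u" "v \<in> words X" "B = cls X R v"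
    using carrier_cls by metis
  then show "induced R (A \<otimes>\<^bsub>pres_group X R\<^esub> B) = induced R A \<otimes> induced R B"
    using induced_cls[OF R] by (simp add: cls_mult evalw_append)
qed

end

lemma hom_evalw:
  assumes "word_eval G f X" "group H" "h \<in> hom G H" "u \<in> words X"
  shows "h (evalw G f u) = evalw H (\<lambda>x. h (f x)) u"
proof -
  interpret E: word_eval G f X by (rule assms(1))
  interpret group_hom G H h
    using assms(2,3) by (simp add: group_hom_def group_hom_axioms_def E.group_axioms)
  show ?thesis using assms(4) by (induction u) (auto simp: E.f_closed)
qed

lemma cls_evalw: "w \<in> words X \<Longrightarrow> evalw (pres_group X R) (\<lambda>x. cls X R (gen x)) w = cls X R w"
proof (induction w)
  case (Cons l w)
  obtain x b where l: "l = (x, b)" by (cases l)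
  then have x: "x \<in> X" "w \<in> words X" using Cons by auto
  have "cls X R [(x, b)] = (if b then cls X R (gen x) else inv\<^bsub>pres_group X R\<^esub> (cls X R (gen x)))"
    using x by (auto simp: cls_inv gen_def)
  moreover have "cls X R (l # w) = cls X R [(x, b)] \<otimes>\<^bsub>pres_group X R\<^esub> cls X R w"
    using x l by (simp add: cls_mult)
  ultimately show ?case using Cons x l by simp
qed (simp add: cls_one)

lemma word_eval_cls: "word_eval (pres_group X R) (\<lambda>x. cls X R (gen x)) X"
  by (intro word_eval.intro word_eval_axioms.intro pres_group_group) (simp add: cls_carrier)

text \<open>Uniqueness in von Dyck's theorem, in the form used to check that two
  homomorphisms are mutually inverse: it suffices to test on the generators.\<close>
lemma pres_group_left_inverse:
  assumes H: "group H" and h1: "h1 \<in> hom (pres_group X R) H" and h2: "h2 \<in> hom H (pres_group X R)"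
    and gens: "\<And>x. x \<in> X \<Longrightarrow> h2 (h1 (cls X R (gen x))) = cls X R (gen x)"
    and A: "A \<in> carrier (pres_group X R)"
  shows "h2 (h1 A) = A"
proof -
  let ?P = "pres_group X R" and ?g = "\<lambda>x. cls X R (gen x)"
  have E: "word_eval H (\<lambda>x. h1 (?g x)) X"
    using H h1 by (intro word_eval.intro word_eval_axioms.intro) (auto simp: cls_carrier hom_def)
  obtain w where w: "w \<in> words X" "A = cls X R w" using carrier_cls A by blast
  have "h2 (h1 A) = h2 (h1 (evalw ?P ?g w))" by (simp add: cls_evalw[OF w(1)] w(2))
  also have "\<dots> = h2 (evalw H (\<lambda>x. h1 (?g x)) w)"
    using hom_evalw[OF word_eval_cls H h1 w(1)] by simp
  also have "\<dots> = evalw ?P (\<lambda>x. h2 (h1 (?g x))) w"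
    using hom_evalw[OF E pres_group_group h2 w(1)] .
  also have "\<dots> = evalw ?P ?g w" using gens w(1) by (rule evalw_cong)
  also have "\<dots> = A" by (simp add: cls_evalw[OF w(1)] w(2))
  finally show ?thesis .
qed

lemma iso_by_inverse:
  assumes h1: "h1 \<in> hom G H" and h2: "h2 \<in> hom H G"
    and l: "\<And>x. x \<in> carrier G \<Longrightarrow> h2 (h1 x) = x" and r: "\<And>y. y \<in> carrier H \<Longrightarrow> h1 (h2 y) = y"
  shows "G \<cong> H"
proof -
  have "bij_betw h1 (carrier G) (carrier H)"
    by (rule bij_betw_byWitness[where f'=h2]) (use h1 h2 l r in \<open>auto simp: hom_def\<close>)
  then show ?thesis using h1 by (auto intro: is_isoI isoI)
qed

section \<open>Index shifts in cyclically presented groups\<close>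

lemma shift_Nil [simp]: "shift n k [] = []"
  by (simp add: shift_def)

lemma shift_Cons [simp]:
  "shift n k ((x, b) # w) = (nat ((int x + k) mod int n), b) # shift n k w"
  by (simp add: shift_def)

lemma shift_append [simp]: "shift n k (u @ v) = shift n k u @ shift n k v"
  by (simp add: shift_def)

lemma shift_winv: "shift n k (winv w) = winv (shift n k w)"
  by (simp add: shift_def winv_def rev_map case_prod_beta)

lemma shift_words: "0 < n \<Longrightarrow> shift n k w \<in> words {..<n}"
  by (auto simp: shift_def words_def nat_less_iff)

lemma shift_shift: "0 < n \<Longrightarrow> shift n j (shift n k w) = shift n (j + k) w"
  by (auto simp: shift_def mod_add_right_eq add.commute add.left_commute)

lemma shift_mod: "shift n (k mod int n) w = shift n k w"
  by (simp add: shift_def mod_add_right_eq)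

lemma shift_0: "w \<in> words {..<n} \<Longrightarrow> shift n 0 w = w"
  by (induction w) auto

lemma xg_words: "0 < n \<Longrightarrow> xg n i \<in> words {..<n}"
  by (simp add: xg_def nat_less_iff)

lemma xg_nat: "j < n \<Longrightarrow> xg n (int j) = gen j"
  by (simp add: xg_def)

lemma cor_w_words: "0 < n \<Longrightarrow> cor_w n ps \<in> words {..<n}"
  by (simp add: cor_w_def xg_words del: upt_Suc)

lemma cor_w_cyc_rel:
  assumes "0 < n" shows "cor_w n ps \<in> cyc_rels n (cor_w n ps)"
proof -
  have "cor_w n ps = shift n (int 0) (cor_w n ps)"
    using shift_0[OF cor_w_words[OF assms]] by simp
  then show ?thesis unfolding cyc_rels_def using assms by blast
qed

section \<open>Groups containing a pair of elements \<open>a\<close>, \<open>c\<close>\<close>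

text \<open>All three groups of the theorem contain elements \<open>a\<close> and \<open>c\<close> satisfying
  \<open>[a, c\<^sup>n] = 1\<close> and \<open>c U = U a\<close>.\<close>

locale ac_pair = group K for K (structure) +
  fixes a c
  assumes a_closed [simp]: "a \<in> carrier K" and c_closed [simp]: "c \<in> carrier K"
begin

definition C :: "int \<Rightarrow> 'a" where
  "C k = c [^] k"

text \<open>chi_k = c^k a c^(-k-1); x_img j = chi_j is the image of the generator x_j of G_n(w).\<close>
definition chi :: "int \<Rightarrow> 'a" where
  "chi k = C k \<otimes> a \<otimes> C (- k - 1)"

definition x_img :: "nat \<Rightarrow> 'a" where
  "x_img j = chi (int j)"

text \<open>a_img i = c^-(i-1) a c^(i-1), the image of the LOG generator a_i.\<close>
definition a_img :: "nat \<Rightarrow> 'a" where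
  "a_img i = C (- (int i - 1)) \<otimes> a \<otimes> C (int i - 1)"

definition U :: "nat list \<Rightarrow> 'a" where
  "U ps = gprod K (\<lambda>i. a \<otimes> C (pext ps (i + 1) - pext ps i)) [0..<length ps]"

definition ac_img :: "gac \<Rightarrow> 'a" where
  "ac_img x = (case x of GA \<Rightarrow> a | GC \<Rightarrow> c)"

lemma C_closed [simp]: "C k \<in> carrier K"
  by (simp add: C_def)

lemma chi_closed [simp]: "chi k \<in> carrier K"
  by (simp add: chi_def)

lemma a_img_closed [simp]: "a_img i \<in> carrier K"
  by (simp add: a_img_def)

lemma U_closed [simp]: "U ps \<in> carrier K"
  by (simp add: U_def)

lemma C_add: "C (i + j) = C i \<otimes> C j"
  by (simp add: C_def int_pow_mult)

lemma C_0 [simp]: "C 0 = \<one>"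
  by (simp add: C_def)

lemma C_1: "C 1 = c"
  by (simp add: C_def)

lemma C_inv: "inv (C k) = C (- k)"
  by (simp add: C_def int_pow_neg)

lemma C_inverse [simp]: "C k \<otimes> C (- k) = \<one>"
  by (simp flip: C_add)

lemma C_split: "k = i + j \<Longrightarrow> C k = C i \<otimes> C j"
  by (simp add: C_add)

lemma C_cancel: "i + j = 0 \<Longrightarrow> x \<in> carrier K \<Longrightarrow> C i \<otimes> (C j \<otimes> x) = x"
  by (simp add: m_assoc[symmetric] C_add[symmetric])

lemma x_img_eval: "word_eval K x_img X"
  by unfold_locales (simp add: x_img_def)

lemma ac_img_eval: "word_eval K ac_img X"
  by unfold_locales (simp add: ac_img_def split: gac.split)

lemma chi_step: "C s \<otimes> a = chi s \<otimes> C (s + 1)"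
proof -
  have "chi s \<otimes> C (s + 1) = C s \<otimes> a \<otimes> (C (- s - 1) \<otimes> C (s + 1))"
    by (simp add: chi_def m_assoc)
  also have "\<dots> = C s \<otimes> a" by (simp flip: C_add)
  finally show ?thesis by simp
qed

lemma chi_conj: "C d \<otimes> chi k \<otimes> C (- d) = chi (k + d)"
proof -
  have "C d \<otimes> chi k \<otimes> C (- d) = C (d + k) \<otimes> a \<otimes> (C (- k - 1) \<otimes> C (- d))"
    by (simp add: chi_def m_assoc C_add)
  also have "\<dots> = chi (k + d)" by (simp add: chi_def flip: C_add) (simp add: algebra_simps)
  finally show ?thesis .
qed

text \<open>Stated for both spellings of 1, since the simplifier produces either.\<close>
lemma a_img_1: "a_img 1 = a" "a_img (Suc 0) = a"
  by (simp_all add: a_img_def)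

lemma a_img_Suc: "a_img (Suc i) = inv c \<otimes> a_img i \<otimes> c"
proof -
  have "C (- (int (Suc i) - 1)) = C (- 1) \<otimes> C (- (int i - 1))"
    and "C (int (Suc i) - 1) = C (int i - 1) \<otimes> C 1"
    by (simp_all flip: C_add)
  then show ?thesis unfolding a_img_def by (simp add: C_1 C_inv[symmetric] m_assoc)
qed

text \<open>Telescoping: moving c^(Q 0) through a product of factors a c^m turns it into a
  product of chi's, and a product of conjugates c^(P i) a c^(-P i) collapses.\<close>
lemma telescope_chi:
  "C (Q 0) \<otimes> gprod K (\<lambda>i. a \<otimes> C (Q (i + 1) - Q i - 1)) [0..<k]
     = gprod K (\<lambda>i. chi (Q i)) [0..<k] \<otimes> C (Q k)"
proof (induction k)
  case (Suc k)
  have "C (Q 0) \<otimes> gprod K (\<lambda>i. a \<otimes> C (Q (i + 1) - Q i - 1)) [0..<Suc k]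
      = gprod K (\<lambda>i. chi (Q i)) [0..<k] \<otimes> (C (Q k) \<otimes> a) \<otimes> C (Q (k + 1) - Q k - 1)"
    using Suc.IH by (simp add: gprod_snoc m_assoc[symmetric])
  also have "\<dots> = gprod K (\<lambda>i. chi (Q i)) [0..<k] \<otimes> chi (Q k) \<otimes> (C (Q k + 1) \<otimes> C (Q (k + 1) - Q k - 1))"
    by (simp add: chi_step m_assoc)
  also have "\<dots> = gprod K (\<lambda>i. chi (Q i)) [0..<Suc k] \<otimes> C (Q (Suc k))"
    by (simp add: gprod_snoc flip: C_add)
  finally show ?case .
qed simp

lemma telescope_conj:
  "gprod K (\<lambda>i. C (P i) \<otimes> a \<otimes> C (- P i)) [0..<k] \<otimes> C (P k)
     = C (P 0) \<otimes> gprod K (\<lambda>i. a \<otimes> C (P (i + 1) - P i)) [0..<k]"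
proof (induction k)
  case (Suc k)
  have "gprod K (\<lambda>i. C (P i) \<otimes> a \<otimes> C (- P i)) [0..<Suc k] \<otimes> C (P (Suc k))
      = gprod K (\<lambda>i. C (P i) \<otimes> a \<otimes> C (- P i)) [0..<k] \<otimes> C (P k) \<otimes> a \<otimes> (C (- P k) \<otimes> C (P (Suc k)))"
    by (simp add: gprod_snoc m_assoc)
  also have "\<dots> = C (P 0) \<otimes> gprod K (\<lambda>i. a \<otimes> C (P (i + 1) - P i)) [0..<k] \<otimes> a \<otimes> C (P (k + 1) - P k)"
    using Suc.IH by (simp flip: C_add)
  also have "\<dots> = C (P 0) \<otimes> gprod K (\<lambda>i. a \<otimes> C (P (i + 1) - P i)) [0..<Suc k]"
    by (simp add: gprod_snoc m_assoc)
  finally show ?case .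
qed simp

text \<open>The key identity: c U = U a holds iff
  chi_(p_0) chi_(p_1+1) ... chi_(p_r+r) = chi_(p_0+1) chi_(p_1+2) ... chi_(p_(r-1)+r),
  i.e. iff the relator w of G_n(w) holds for the chi's.\<close>
lemma U_rel_iff_chi_products:
  "c \<otimes> U ps = U ps \<otimes> a \<longleftrightarrow>
   gprod K (\<lambda>i. chi (pext ps i + int i + 1)) [0..<length ps]
     = gprod K (\<lambda>i. chi (pext ps i + int i)) [0..<length ps + 1]"
proof -
  let ?r = "length ps"
  let ?P1 = "gprod K (\<lambda>i. chi (pext ps i + int i + 1)) [0..<?r]"
  let ?P0' = "gprod K (\<lambda>i. chi (pext ps i + int i)) [0..<?r]"
  let ?P0 = "gprod K (\<lambda>i. chi (pext ps i + int i)) [0..<?r + 1]"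
  have pr: "pext ps ?r = -1" by (simp add: pext_def)
  have e1: "C (pext ps 0 + 1) \<otimes> U ps = ?P1 \<otimes> C (int ?r)"
    using telescope_chi[of "\<lambda>i. pext ps i + int i + 1" ?r] pr by (simp add: U_def algebra_simps)
  have e0: "C (pext ps 0) \<otimes> U ps = ?P0' \<otimes> C (int ?r - 1)"
    using telescope_chi[of "\<lambda>i. pext ps i + int i" ?r] pr by (simp add: U_def algebra_simps)
  have "C (pext ps 0) \<otimes> (U ps \<otimes> a) = ?P0' \<otimes> (C (int ?r - 1) \<otimes> a)"
    using e0 by (simp add: m_assoc[symmetric])
  also have "\<dots> = ?P0 \<otimes> C (int ?r)"
    using pr by (simp add: chi_step gprod_snoc m_assoc)
  finally have f0: "C (pext ps 0) \<otimes> (U ps \<otimes> a) = ?P0 \<otimes> C (int ?r)" .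
  have f1: "C (pext ps 0) \<otimes> (c \<otimes> U ps) = ?P1 \<otimes> C (int ?r)"
    using e1 by (simp add: C_add C_1 m_assoc)
  have "c \<otimes> U ps = U ps \<otimes> a \<longleftrightarrow> C (pext ps 0) \<otimes> (c \<otimes> U ps) = C (pext ps 0) \<otimes> (U ps \<otimes> a)"
    by simp
  also have "\<dots> \<longleftrightarrow> ?P1 = ?P0" using f0 f1 by simp
  finally show ?thesis .
qed

lemma evalw_AC_U: "evalw K ac_img (AC_U ps) = U ps"
proof -
  interpret E: word_eval K ac_img UNIV by (rule ac_img_eval)
  show ?thesis unfolding AC_U_def U_def
    by (simp add: E.evalw_concat E.evalw_append E.evalw_genpow ac_img_def C_def)
qed

lemma AC_rels_iff:
  "(\<forall>r\<in>AC_rels n ps. evalw K ac_img r = \<one>) \<longleftrightarrow>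
   c \<otimes> U ps = U ps \<otimes> a \<and> a \<otimes> C (int n) = C (int n) \<otimes> a"
proof -
  interpret E: word_eval K ac_img UNIV by (rule ac_img_eval)
  have r1: "evalw K ac_img (winv (AC_U ps) @ gen GC @ AC_U ps @ winv (gen GA))
      = inv (U ps) \<otimes> (c \<otimes> (U ps \<otimes> inv a))"
    by (simp add: E.evalw_append E.evalw_winv evalw_AC_U ac_img_def)
  have r2: "evalw K ac_img (winv (gen GA) @ genpow GC (- int n) @ gen GA @ genpow GC (int n))
      = inv a \<otimes> (inv (C (int n)) \<otimes> (a \<otimes> C (int n)))"
    by (simp add: E.evalw_append E.evalw_winv E.evalw_genpow ac_img_def C_def int_pow_neg)
  have "inv (U ps) \<otimes> (c \<otimes> (U ps \<otimes> inv a)) = \<one> \<longleftrightarrow> c \<otimes> U ps \<otimes> inv a = U ps"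
    by (simp add: inv_solve_left' m_assoc)
  also have "\<dots> \<longleftrightarrow> c \<otimes> U ps = U ps \<otimes> a"
    by (simp add: inv_solve_right')
  moreover have "inv a \<otimes> (inv (C (int n)) \<otimes> (a \<otimes> C (int n))) = \<one> \<longleftrightarrow>
      a \<otimes> C (int n) = C (int n) \<otimes> a"
    by (simp add: inv_solve_left')
  ultimately show ?thesis unfolding AC_rels_def using r1 r2 by auto
qed

end

lemma ac_pair_hom:
  assumes K: "ac_pair K a c" and K': "ac_pair K' a' c'" and h: "h \<in> hom K K'"
    and ha: "h a = a'" and hc: "h c = c'"
  shows "h (ac_pair.C K c k) = ac_pair.C K' c' k"
    and "h (ac_pair.chi K a c k) = ac_pair.chi K' a' c' k"
    and "h (ac_pair.a_img K a c i) = ac_pair.a_img K' a' c' i"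
proof -
  interpret A: ac_pair K a c by (rule K)
  interpret B: ac_pair K' a' c' by (rule K')
  interpret group_hom K K' h
    using h by (simp add: group_hom_def group_hom_axioms_def A.group_axioms B.group_axioms)
  show C: "h (A.C k) = B.C k" for k by (simp add: A.C_def B.C_def hc hom_int_pow)
  show "h (A.chi k) = B.chi k" by (simp add: A.chi_def B.chi_def C ha)
  show "h (A.a_img i) = B.a_img i" by (simp add: A.a_img_def B.a_img_def C ha)
qed

locale ac_period = ac_pair +
  fixes n :: nat
  assumes n_pos: "1 \<le> n" and a_comm_cn: "a \<otimes> C (int n) = C (int n) \<otimes> a"
begin

text \<open>Conjugation of a by c^j only depends on j modulo n, because c^n commutes with a.\<close>
lemma conj_a_period: "C (j + int n * d) \<otimes> a \<otimes> C (- (j + int n * d)) = C j \<otimes> a \<otimes> C (- j)"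
proof -
  have comm: "a \<otimes> C (int n * d) = C (int n * d) \<otimes> a"
    using int_pow_commutes[OF a_comm_cn] by (simp add: C_def int_pow_pow)
  have "C (j + int n * d) = C j \<otimes> C (int n * d)"
    and "C (- (j + int n * d)) = C (- (int n * d)) \<otimes> C (- j)"
    by (rule C_split, simp)+
  then have "C (j + int n * d) \<otimes> a \<otimes> C (- (j + int n * d))
      = C j \<otimes> ((C (int n * d) \<otimes> a) \<otimes> (C (- (int n * d)) \<otimes> C (- j)))"
    by (simp add: m_assoc)
  also have "\<dots> = C j \<otimes> a \<otimes> C (- j)"
    by (simp add: comm[symmetric] m_assoc C_cancel)
  finally show ?thesis .
qed

lemma chi_mod: "chi (k mod int n) = chi k"
proof -
  have conj: "chi k = C k \<otimes> a \<otimes> C (- k) \<otimes> C (- 1)" for k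
    by (simp add: chi_def m_assoc flip: C_add)
  show ?thesis
    unfolding conj using conj_a_period[of "k mod int n" "k div int n"] by simp
qed

lemma a_img_wrap: "a_img (Suc n) = a"
  using conj_a_period[of 0 "- 1"] by (simp add: a_img_def)

lemma a_img_conj: "p \<le> n - 1 \<Longrightarrow> a_img (n - p) = C (int p + 1) \<otimes> a \<otimes> C (- (int p + 1))"
  using n_pos conj_a_period[of "int p + 1" "- 1"] by (simp add: a_img_def of_nat_diff algebra_simps)

lemma evalw_shift:
  assumes u: "u \<in> words {..<n}"
  shows "evalw K x_img (shift n k u) = C k \<otimes> evalw K x_img u \<otimes> C (- k)"
proof -
  interpret E: word_eval K x_img "{..<n}" by (rule x_img_eval)
  have "evalw K x_img (shift n k u) = evalw K (\<lambda>x. x_img (nat ((int x + k) mod int n))) u"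
    unfolding shift_def by (rule evalw_rename)
  also have "\<dots> = evalw K (\<lambda>x. C k \<otimes> x_img x \<otimes> inv (C k)) u"
  proof (rule evalw_cong[OF _ u])
    fix x
    have "x_img (nat ((int x + k) mod int n)) = chi ((int x + k) mod int n)"
      using n_pos by (simp add: x_img_def)
    also have "\<dots> = C k \<otimes> x_img x \<otimes> inv (C k)"
      by (simp add: chi_mod chi_conj x_img_def C_inv)
    finally show "x_img (nat ((int x + k) mod int n)) = C k \<otimes> x_img x \<otimes> inv (C k)" .
  qed
  also have "\<dots> = C k \<otimes> evalw K x_img u \<otimes> C (- k)"
    using E.evalw_conj[OF C_closed u, of k] by (simp add: C_inv)
  finally show ?thesis .
qed

lemma evalw_xg: "evalw K x_img (xg n i) = chi i"
  using n_pos by (simp add: xg_def gen_def x_img_def chi_mod)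

lemma U_rel_iff_cor_w: "c \<otimes> U ps = U ps \<otimes> a \<longleftrightarrow> evalw K x_img (cor_w n ps) = \<one>"
proof -
  interpret E: word_eval K x_img "{..<n}" by (rule x_img_eval)
  let ?P0 = "gprod K (\<lambda>i. chi (pext ps i + int i)) [0..<length ps + 1]"
  let ?P1 = "gprod K (\<lambda>i. chi (pext ps i + int i + 1)) [0..<length ps]"
  have "evalw K x_img (cor_w n ps) = ?P0 \<otimes> inv ?P1"
    using n_pos unfolding cor_w_def
    by (simp add: E.evalw_append E.evalw_winv E.evalw_concat evalw_xg xg_words del: upt_Suc)
  then show ?thesis
    by (simp add: U_rel_iff_chi_products inv_solve_right' eq_commute[of ?P1])
qed

end

locale ac_word = ac_period +
  fixes ps :: "nat list"
  assumes p_bound: "\<forall>p\<in>set ps. p \<le> n - 1"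
begin

text \<open>The LOG relations t_(j+1) = a_(n-p_j)^-1 t_j a_(n-p_j) together with t_0 |-> c force
  t_j |-> h_j^-1 c h_j, where h_j = a_img (n - p_0) ... a_img (n - p_(j-1)).\<close>
definition hprod :: "nat \<Rightarrow> 'a" where
  "hprod j = gprod K (\<lambda>k. a_img (n - ps ! k)) [0..<j]"

definition t_img :: "nat \<Rightarrow> 'a" where
  "t_img j = inv (hprod j) \<otimes> c \<otimes> hprod j"

definition log_img :: "nat + nat \<Rightarrow> 'a" where
  "log_img x = (case x of Inl i \<Rightarrow> a_img i | Inr j \<Rightarrow> t_img j)"

lemma hprod_closed [simp]: "hprod j \<in> carrier K"
  by (simp add: hprod_def)

lemma t_img_closed [simp]: "t_img j \<in> carrier K"
  by (simp add: t_img_def)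

lemma log_img_eval: "word_eval K log_img X"
  by unfold_locales (simp add: log_img_def split: sum.split)

lemma t_img_0: "t_img 0 = c"
  by (simp add: t_img_def hprod_def)

lemma t_img_Suc: "t_img (Suc j) = inv (a_img (n - ps ! j)) \<otimes> t_img j \<otimes> a_img (n - ps ! j)"
  by (simp add: t_img_def hprod_def gprod_snoc inv_mult_group m_assoc)

lemma hprod_length: "hprod (length ps) = C (pext ps 0 + 1) \<otimes> U ps"
proof -
  let ?P = "\<lambda>k. pext ps k + 1"
  have "hprod (length ps) = gprod K (\<lambda>i. C (?P i) \<otimes> a \<otimes> C (- ?P i)) [0..<length ps]"
    unfolding hprod_def using p_bound by (intro gprod_cong) (simp add: a_img_conj pext_def)
  also have "\<dots> = gprod K (\<lambda>i. C (?P i) \<otimes> a \<otimes> C (- ?P i)) [0..<length ps] \<otimes> C (?P (length ps))"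
    by (simp add: pext_def)
  also have "\<dots> = C (pext ps 0 + 1) \<otimes> U ps"
    using telescope_conj[of ?P "length ps"] by (simp add: U_def)
  finally show ?thesis .
qed

lemma t_img_length: "t_img (length ps) = inv (U ps) \<otimes> c \<otimes> U ps"
proof -
  let ?p = "pext ps 0 + 1"
  have comm: "c \<otimes> C ?p = C ?p \<otimes> c"
    using C_add[of 1 ?p] C_add[of ?p 1] by (simp add: C_1 add.commute)
  have "t_img (length ps) = inv (U ps) \<otimes> (inv (C ?p) \<otimes> ((c \<otimes> C ?p) \<otimes> U ps))"
    unfolding t_img_def hprod_length by (simp add: inv_mult_group m_assoc)
  also have "\<dots> = inv (U ps) \<otimes> (c \<otimes> U ps)"
    by (simp add: comm m_assoc)
  finally show ?thesis by (simp add: m_assoc)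
qed

end

lemma ac_word_hom_log_img:
  assumes K: "ac_word K a c n ps" and K': "ac_word K' a' c' n ps" and h: "h \<in> hom K K'"
    and ha: "h a = a'" and hc: "h c = c'"
  shows "h (ac_word.log_img K a c n ps x) = ac_word.log_img K' a' c' n ps x"
proof -
  interpret A: ac_word K a c n ps by (rule K)
  interpret B: ac_word K' a' c' n ps by (rule K')
  interpret group_hom K K' h
    using h by (simp add: group_hom_def group_hom_axioms_def A.group_axioms B.group_axioms)
  note pair = ac_pair_hom[OF A.ac_pair_axioms B.ac_pair_axioms h ha hc]
  have "h (A.hprod j) = B.hprod j" for j
    unfolding A.hprod_def B.hprod_def
    by (subst gprod_hom) (simp_all add: group_hom_axioms pair)
  then have "h (A.t_img j) = B.t_img j" for j
    by (simp add: A.t_img_def B.t_img_def hc)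
  then show ?thesis by (simp add: A.log_img_def B.log_img_def pair split: sum.split)
qed

locale ac_model = ac_word +
  assumes U_rel: "c \<otimes> U ps = U ps \<otimes> a"
begin

lemma t_img_length_a: "t_img (length ps) = a"
  by (simp add: t_img_length inv_solve_left' U_rel m_assoc)

lemma cyc_rels_hold: "r \<in> cyc_rels n (cor_w n ps) \<Longrightarrow> evalw K x_img r = \<one>"
  using n_pos U_rel unfolding U_rel_iff_cor_w
  by (auto simp: cyc_rels_def evalw_shift cor_w_words)

lemma AC_rels_hold: "r \<in> AC_rels n ps \<Longrightarrow> evalw K ac_img r = \<one>"
  using AC_rels_iff U_rel a_comm_cn by blast

lemma evalw_LOG_a: "1 \<le> i \<Longrightarrow> i \<le> n + 1 \<Longrightarrow> evalw K log_img (LOG_a n i) = a_img i"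
  by (simp add: LOG_a_def gen_def log_img_def a_img_wrap a_img_1)

lemma evalw_LOG_t: "j \<le> length ps \<Longrightarrow> evalw K log_img (LOG_t ps j) = t_img j"
  by (auto simp: LOG_t_def gen_def log_img_def t_img_length_a a_img_1)

lemma LOG_rels_hold: "r \<in> LOG_rels n ps \<Longrightarrow> evalw K log_img r = \<one>"
proof -
  interpret E: word_eval K log_img UNIV by (rule log_img_eval)
  assume "r \<in> LOG_rels n ps"
  then consider (A) i where "1 \<le> i" "i \<le> n"
      "r = releq (LOG_a n (i + 1)) (winv (LOG_t ps 0) @ LOG_a n i @ LOG_t ps 0)"
    | (T) j where "j < length ps"
      "r = releq (LOG_t ps (j + 1)) (winv (LOG_a n (n - ps ! j)) @ LOG_t ps j @ LOG_a n (n - ps ! j))"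
    unfolding LOG_rels_def by blast
  then show ?thesis
  proof cases
    case (A i)
    then show ?thesis
      by (simp add: releq_def E.evalw_append E.evalw_winv evalw_LOG_a evalw_LOG_t t_img_0
          a_img_Suc m_assoc inv_mult_group)
  next
    case (T j)
    then have "ps ! j \<le> n - 1" using p_bound by auto
    then have "1 \<le> n - ps ! j" "n - ps ! j \<le> n + 1" using n_pos by auto
    then show ?thesis using T
      by (simp add: releq_def E.evalw_append E.evalw_winv evalw_LOG_a evalw_LOG_t t_img_Suc
          m_assoc inv_mult_group)
  qed
qed

end

section \<open>The two-generator group\<close>

lemma AC_ac_model:
  assumes n: "1 \<le> n" and p: "\<forall>p\<in>set ps. p \<le> n - 1"
  shows "ac_model (AC_group n ps) (cls UNIV (AC_rels n ps) (gen GA))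
           (cls UNIV (AC_rels n ps) (gen GC)) n ps"
proof -
  let ?G = "AC_group n ps" and ?q = "cls UNIV (AC_rels n ps)"
  interpret A: ac_pair ?G "?q (gen GA)" "?q (gen GC)"
    by (simp add: ac_pair_def ac_pair_axioms_def AC_group_def pres_group_group cls_carrier)
  have "A.ac_img = (\<lambda>x. ?q (gen x))"
    by (rule ext) (simp add: A.ac_img_def split: gac.split)
  then have "\<forall>r\<in>AC_rels n ps. evalw ?G A.ac_img r = \<one>\<^bsub>?G\<^esub>"
    by (simp add: AC_group_def cls_evalw cls_relator)
  then have "?q (gen GC) \<otimes>\<^bsub>?G\<^esub> A.U ps = A.U ps \<otimes>\<^bsub>?G\<^esub> ?q (gen GA)"
    and "?q (gen GA) \<otimes>\<^bsub>?G\<^esub> A.C (int n) = A.C (int n) \<otimes>\<^bsub>?G\<^esub> ?q (gen GA)"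
    unfolding A.AC_rels_iff by auto
  then show ?thesis
    using n p by (intro ac_model.intro ac_word.intro ac_period.intro A.ac_pair_axioms
        ac_period_axioms.intro ac_word_axioms.intro ac_model_axioms.intro) auto
qed

section \<open>The LOG group\<close>

locale LOG_params =
  fixes n :: nat and ps :: "nat list"
  assumes n_pos: "1 \<le> n" and r_pos: "1 \<le> length ps" and p_bound: "\<forall>p\<in>set ps. p \<le> n - 1"
begin

abbreviation LG :: "(nat + nat) word set monoid" where
  "LG \<equiv> LOG_group n ps"

abbreviation cl :: "(nat + nat) word \<Rightarrow> (nat + nat) word set" where
  "cl \<equiv> cls (LOG_gens n ps) (LOG_rels n ps)"

lemma LOG_a_words: "1 \<le> i \<Longrightarrow> i \<le> n + 1 \<Longrightarrow> LOG_a n i \<in> words (LOG_gens n ps)"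
  using n_pos by (auto simp: LOG_a_def LOG_gens_def)

lemma LOG_t_words: "j \<le> length ps \<Longrightarrow> LOG_t ps j \<in> words (LOG_gens n ps)"
  using n_pos by (auto simp: LOG_t_def LOG_gens_def)

lemma LOG_gens_base [simp]: "Inl (Suc 0) \<in> LOG_gens n ps" "Inr 0 \<in> LOG_gens n ps"
  using n_pos r_pos by (auto simp: LOG_gens_def)

lemma LOG_t_0: "LOG_t ps 0 = gen (Inr 0)"
  using r_pos by (cases ps) (auto simp: LOG_t_def)

lemma a_index_range: "j < length ps \<Longrightarrow> 1 \<le> n - ps ! j \<and> n - ps ! j \<le> n + 1"
  using p_bound n_pos by (auto dest!: nth_mem)

lemma cl_append: "u \<in> words (LOG_gens n ps) \<Longrightarrow> v \<in> words (LOG_gens n ps) \<Longrightarrow>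
    cl (u @ v) = cl u \<otimes>\<^bsub>LG\<^esub> cl v"
  by (simp add: LOG_group_def cls_mult)

lemma cl_winv: "u \<in> words (LOG_gens n ps) \<Longrightarrow> cl (winv u) = inv\<^bsub>LG\<^esub> (cl u)"
  by (simp add: LOG_group_def cls_inv)

text \<open>The generators a = a_1 and c = t_0.\<close>
abbreviation aL :: "(nat + nat) word set" where
  "aL \<equiv> cl (gen (Inl (Suc 0)))"

abbreviation tL :: "(nat + nat) word set" where
  "tL \<equiv> cl (gen (Inr 0))"

sublocale L: ac_pair LG aL tL
  by (simp add: ac_pair_def ac_pair_axioms_def LOG_group_def pres_group_group cls_carrier)

text \<open>The relations a_(i+1) = t_0^-1 a_i t_0 express every a_i through a and c.\<close>
lemma cl_LOG_a: "1 \<le> i \<Longrightarrow> i \<le> n + 1 \<Longrightarrow> cl (LOG_a n i) = L.a_img i"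
proof (induction i)
  case (Suc i)
  show ?case
  proof (cases "i = 0")
    case True
    then show ?thesis using n_pos by (simp add: LOG_a_def L.a_img_1)
  next
    case False
    then have i: "1 \<le> i" "i \<le> n" using Suc.prems by auto
    have "cl (LOG_a n (i + 1)) = cl (winv (LOG_t ps 0) @ LOG_a n i @ LOG_t ps 0)"
      using i by (intro cls_releq) (auto simp: LOG_rels_def LOG_a_words LOG_t_words)
    also have "\<dots> = L.a_img (Suc i)"
      using i Suc.IH by (simp add: LOG_t_0 cl_append cl_winv LOG_a_words L.a_img_Suc L.m_assoc)
    finally show ?thesis by simp
  qed
qed simp

lemma a_comm_cn: "aL \<otimes>\<^bsub>LG\<^esub> L.C (int n) = L.C (int n) \<otimes>\<^bsub>LG\<^esub> aL"
proof -
  let ?a = aL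
  have "?a = L.C (- int n) \<otimes>\<^bsub>LG\<^esub> (?a \<otimes>\<^bsub>LG\<^esub> L.C (int n))"
    using cl_LOG_a[of "n + 1"] n_pos by (simp add: LOG_a_def L.a_img_def L.m_assoc)
  then have "L.C (int n) \<otimes>\<^bsub>LG\<^esub> ?a = L.C (int n) \<otimes>\<^bsub>LG\<^esub> (L.C (- int n) \<otimes>\<^bsub>LG\<^esub> (?a \<otimes>\<^bsub>LG\<^esub> L.C (int n)))"
    by simp
  then show ?thesis by (simp add: L.C_cancel)
qed

sublocale L: ac_word LG aL tL n ps
  using n_pos p_bound a_comm_cn by unfold_locales auto

text \<open>The relations t_(j+1) = a_(n-p_j)^-1 t_j a_(n-p_j) express every t_j through a and c.\<close>
lemma cl_LOG_t: "j \<le> length ps \<Longrightarrow> cl (LOG_t ps j) = L.t_img j"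
proof (induction j)
  case 0
  then show ?case by (simp add: LOG_t_0 L.t_img_0)
next
  case (Suc j)
  then have j: "j < length ps" by simp
  note range = a_index_range[OF j]
  have "cl (LOG_t ps (j + 1)) = cl (winv (LOG_a n (n - ps ! j)) @ LOG_t ps j @ LOG_a n (n - ps ! j))"
    using j range by (intro cls_releq) (auto simp: LOG_rels_def LOG_a_words LOG_t_words)
  also have "\<dots> = L.t_img (Suc j)"
    using j range Suc.IH
    by (simp add: cl_append cl_winv LOG_a_words LOG_t_words cl_LOG_a L.t_img_Suc L.m_assoc)
  finally show ?case by simp
qed

lemma U_rel: "tL \<otimes>\<^bsub>LG\<^esub> L.U ps = L.U ps \<otimes>\<^bsub>LG\<^esub> aL"
proof -
  have "aL = L.t_img (length ps)"
    using cl_LOG_t[of "length ps"] by (simp add: LOG_t_def)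
  then show ?thesis by (simp add: L.t_img_length L.m_assoc L.inv_solve_left)
qed

sublocale L: ac_model LG aL tL n ps
  by unfold_locales (rule U_rel)

lemma log_img_gen:
  assumes "x \<in> LOG_gens n ps" shows "L.log_img x = cl (gen x)"
proof (cases x)
  case (Inl i)
  then have "1 \<le> i" "i \<le> n" using assms by (auto simp: LOG_gens_def)
  then show ?thesis using cl_LOG_a[of i] Inl by (simp add: L.log_img_def LOG_a_def)
next
  case (Inr j)
  then have "j < length ps" using assms by (auto simp: LOG_gens_def)
  then show ?thesis using cl_LOG_t[of j] Inr by (simp add: L.log_img_def LOG_t_def)
qed

end

section \<open>The natural HNN extension of a cyclically presented group\<close>

locale cyc_setting =
  fixes n :: nat and w :: "nat word"
  assumes n_pos: "0 < n"
begin

abbreviation pc :: "nat word \<Rightarrow> nat word set" where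
  "pc \<equiv> cls {..<n} (cyc_rels n w)"

abbreviation Gc :: "nat word set monoid" where
  "Gc \<equiv> cyc_group n w"

abbreviation Hn :: "(nat word set \<times> int) monoid" where
  "Hn \<equiv> cyc_hnn n w"

text \<open>theta^k maps relators to relators, hence induces the automorphism phi^k.\<close>
lemma shift_pres_rel:
  "(u, v) \<in> pres_rel {..<n} (cyc_rels n w) \<Longrightarrow>
   (shift n k u, shift n k v) \<in> pres_rel {..<n} (cyc_rels n w)"
proof (induction rule: pres_rel.induct)
  case (pfree u v x b)
  then show ?case
    using n_pos pres_rel.pfree[of "shift n k u" "{..<n}" "shift n k v" "nat ((int x + k) mod int n)" b]
    by (simp add: shift_words nat_less_iff)
next
  case (prel u v r)
  then obtain j where j: "j < n" "r = shift n (int j) w" by (auto simp: cyc_rels_def)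
  have "shift n k r = shift n (int (nat ((k + int j) mod int n))) w"
    using j n_pos by (simp add: shift_shift shift_mod)
  moreover have "nat ((k + int j) mod int n) < n" using n_pos by (simp add: nat_less_iff)
  ultimately have "shift n k r \<in> cyc_rels n w" unfolding cyc_rels_def by blast
  then show ?case
    using n_pos pres_rel.prel[of "shift n k u" "{..<n}" "shift n k v" "shift n k r"]
    by (simp add: shift_words)
qed (use n_pos in \<open>auto intro: pres_rel.intros simp: shift_words\<close>)

lemma cyc_phi_pc: "u \<in> words {..<n} \<Longrightarrow> cyc_phi n w k (pc u) = pc (shift n k u)"
proof -
  assume u: "u \<in> words {..<n}"
  have "pres_rel {..<n} (cyc_rels n w) `` {shift n k u'} = pc (shift n k u)" if "u' \<in> pc u" for u'
    using that unfolding cls_def[symmetric]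
    by (metis Image_singleton_iff cls_def cls_eqI pres_rel.psym shift_pres_rel)
  moreover have "u \<in> pc u" using u by (simp add: cls_self)
  ultimately show ?thesis unfolding cyc_phi_def by auto
qed

lemma Hn_mult:
  "u \<in> words {..<n} \<Longrightarrow> v \<in> words {..<n} \<Longrightarrow>
   (pc u, m) \<otimes>\<^bsub>Hn\<^esub> (pc v, k) = (pc (u @ shift n m v), m + k)"
  using n_pos by (simp add: cyc_hnn_def cyc_group_def cyc_phi_pc cls_mult shift_words)

lemma Hn_one: "\<one>\<^bsub>Hn\<^esub> = (pc [], 0)"
  by (simp add: cyc_hnn_def cyc_group_def cls_one)

lemma Hn_carrier: "x \<in> carrier Hn \<longleftrightarrow> (\<exists>u\<in>words {..<n}. \<exists>m. x = (pc u, m))"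
  using carrier_cls cls_carrier by (fastforce simp: cyc_hnn_def cyc_group_def)

lemma Hn_group: "group Hn"
proof (rule groupI)
  fix x y z assume "x \<in> carrier Hn" "y \<in> carrier Hn" "z \<in> carrier Hn"
  then obtain u m v k t j where "u \<in> words {..<n}" "x = (pc u, m)" "v \<in> words {..<n}" "y = (pc v, k)"
    "t \<in> words {..<n}" "z = (pc t, j)"
    unfolding Hn_carrier by metis
  then show "x \<otimes>\<^bsub>Hn\<^esub> y \<in> carrier Hn" and "x \<otimes>\<^bsub>Hn\<^esub> y \<otimes>\<^bsub>Hn\<^esub> z = x \<otimes>\<^bsub>Hn\<^esub> (y \<otimes>\<^bsub>Hn\<^esub> z)"
    using n_pos by (auto simp: Hn_mult Hn_carrier shift_words shift_shift add.assoc)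
next
  show "\<one>\<^bsub>Hn\<^esub> \<in> carrier Hn" by (auto simp: Hn_one Hn_carrier)
next
  fix x assume "x \<in> carrier Hn"
  then obtain u m where u: "u \<in> words {..<n}" "x = (pc u, m)" unfolding Hn_carrier by metis
  then show "\<one>\<^bsub>Hn\<^esub> \<otimes>\<^bsub>Hn\<^esub> x = x" by (simp add: Hn_one Hn_mult shift_0)
  let ?y = "(pc (shift n (- m) (winv u)), - m)"
  have "?y \<otimes>\<^bsub>Hn\<^esub> x = (pc (winv (shift n (- m) u) @ shift n (- m) u), 0)"
    using u n_pos by (simp add: Hn_mult shift_words shift_winv)
  also have "\<dots> = \<one>\<^bsub>Hn\<^esub>"
    using n_pos by (simp add: Hn_one cls_eqI pres_rel_cancel' shift_words)
  finally show "\<exists>y\<in>carrier Hn. y \<otimes>\<^bsub>Hn\<^esub> x = \<one>\<^bsub>Hn\<^esub>"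
    using n_pos by (intro bexI[of _ ?y]) (auto simp: Hn_carrier shift_words)
qed

text \<open>The elements a = (x_0, 1) and c = (1, 1) of the HNN extension.\<close>
definition ah :: "nat word set \<times> int" where
  "ah = (pc (gen 0), 1)"

definition th :: "nat word set \<times> int" where
  "th = (pc [], 1)"

lemma Hn_pair: "ac_pair Hn ah th"
  using n_pos Hn_group by (auto simp: ac_pair_def ac_pair_axioms_def ah_def th_def Hn_carrier)

lemma Hn_C: "ac_pair.C Hn th k = (pc [], k)"
proof -
  interpret H: ac_pair Hn ah th by (rule Hn_pair)
  have pow: "th [^]\<^bsub>Hn\<^esub> (m::nat) = (pc [], int m)" for m
    by (induction m) (simp_all add: Hn_one th_def Hn_mult)
  show ?thesis
  proof (cases "0 \<le> k")
    case True
    then show ?thesis using pow[of "nat k"] by (simp add: H.C_def)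
  next
    case False
    have "H.C k = inv\<^bsub>Hn\<^esub> (pc [], - k)"
      using False pow[of "nat (- k)"] H.int_pow_neg[of th "- k"] by (simp add: H.C_def)
    also have "\<dots> = (pc [], k)"
      by (rule H.inv_equality) (auto simp: Hn_mult Hn_one Hn_carrier)
    finally show ?thesis .
  qed
qed

lemma Hn_chi: "ac_pair.chi Hn ah th k = (pc (xg n k), 0)"
proof -
  interpret H: ac_pair Hn ah th by (rule Hn_pair)
  have "shift n k (gen 0) = xg n k" by (simp add: gen_def xg_def)
  then show ?thesis
    using n_pos unfolding H.chi_def Hn_C by (simp add: ah_def Hn_mult xg_words shift_words)
qed

lemma Hn_a_comm_cn: "ah \<otimes>\<^bsub>Hn\<^esub> ac_pair.C Hn th (int n) = ac_pair.C Hn th (int n) \<otimes>\<^bsub>Hn\<^esub> ah"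
  using n_pos by (simp add: Hn_C ah_def Hn_mult gen_def)

lemma Hn_evalw_x_img: "u \<in> words {..<n} \<Longrightarrow> evalw Hn (ac_pair.x_img Hn ah th) u = (pc u, 0)"
proof (induction u)
  case (Cons l u)
  interpret H: ac_pair Hn ah th by (rule Hn_pair)
  obtain x b where l: "l = (x, b)" by (cases l)
  then have x: "x < n" "u \<in> words {..<n}" using Cons by auto
  have img: "H.x_img x = (pc (gen x), 0)" using x by (simp add: H.x_img_def Hn_chi xg_nat)
  have "inv\<^bsub>Hn\<^esub> (pc (gen x), 0) = (pc [(x, False)], 0)"
  proof (rule H.inv_equality)
    show "(pc [(x, False)], 0) \<otimes>\<^bsub>Hn\<^esub> (pc (gen x), 0) = \<one>\<^bsub>Hn\<^esub>"
      using x pres_rel.pfree[of "[]" "{..<n}" "[]" x False]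
      by (simp add: Hn_mult Hn_one shift_0 gen_def cls_eqI)
  qed (use x in \<open>auto simp: Hn_carrier\<close>)
  then show ?case using l x Cons.IH img by (cases b) (simp_all add: Hn_mult shift_0 gen_def)
qed (simp add: Hn_one)

end

text \<open>For the relator w of the theorem, the HNN extension of G_n(w) carries a pair with
  both relations; c U = U a holds because w(chi) = (w, 0) = 1.\<close>
lemma Hn_ac_model:
  assumes n: "1 \<le> n" and p: "\<forall>p\<in>set ps. p \<le> n - 1"
  shows "ac_model (cyc_hnn n (cor_w n ps)) (cyc_setting.ah n (cor_w n ps))
           (cyc_setting.th n (cor_w n ps)) n ps"
proof -
  interpret Y: cyc_setting n "cor_w n ps" using n by unfold_locales simp
  interpret H: ac_period Y.Hn Y.ah Y.th n
    using n by (intro ac_period.intro Y.Hn_pair ac_period_axioms.intro Y.Hn_a_comm_cn)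
  have "evalw Y.Hn H.x_img (cor_w n ps) = (Y.pc (cor_w n ps), 0)"
    using n by (simp add: Y.Hn_evalw_x_img cor_w_words)
  also have "\<dots> = \<one>\<^bsub>Y.Hn\<^esub>"
    using n by (simp add: Y.Hn_one cyc_group_def cls_relator cor_w_cyc_rel cor_w_words flip: cls_one)
  finally have "Y.th \<otimes>\<^bsub>Y.Hn\<^esub> H.U ps = H.U ps \<otimes>\<^bsub>Y.Hn\<^esub> Y.ah"
    unfolding H.U_rel_iff_cor_w .
  then show ?thesis
    using p by (intro ac_model.intro ac_word.intro H.ac_period_axioms ac_word_axioms.intro
        ac_model_axioms.intro)
qed

text \<open>A pair with both relations yields a homomorphism out of the HNN extension,
  (g, m) |-> g(chi_0, ..., chi_(n-1)) c^m; it is well defined because the chi's satisfy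
  the relators of G_n(w), and multiplicative because x_j |-> chi_j turns the shift into
  conjugation by c.\<close>
lemma (in ac_model) hnn_hom:
  obtains \<psi> where "\<psi> \<in> hom (cyc_hnn n (cor_w n ps)) K"
    and "\<And>u m. u \<in> words {..<n} \<Longrightarrow>
      \<psi> (cls {..<n} (cyc_rels n (cor_w n ps)) u, m) = evalw K x_img u \<otimes> C m"
proof -
  interpret Y: cyc_setting n "cor_w n ps" using n_pos by unfold_locales simp
  interpret E: word_eval K x_img "{..<n}" by (rule x_img_eval)
  define base where "base = E.induced (cyc_rels n (cor_w n ps))"
  define \<psi> where "\<psi> = (\<lambda>(g, m). base g \<otimes> C m)"
  have \<psi>_pc: "\<psi> (Y.pc u, m) = evalw K x_img u \<otimes> C m" if "u \<in> words {..<n}" for u m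
    unfolding \<psi>_def base_def using that cyc_rels_hold by (simp add: E.induced_cls)
  have "\<psi> \<in> hom Y.Hn K"
  proof (rule homI)
    fix x assume "x \<in> carrier Y.Hn"
    then show "\<psi> x \<in> carrier K" unfolding Y.Hn_carrier by (auto simp: \<psi>_pc)
  next
    fix x y assume "x \<in> carrier Y.Hn" "y \<in> carrier Y.Hn"
    then obtain u m v j where u: "u \<in> words {..<n}" "x = (Y.pc u, m)"
      and v: "v \<in> words {..<n}" "y = (Y.pc v, j)"
      unfolding Y.Hn_carrier by metis
    have "\<psi> (x \<otimes>\<^bsub>Y.Hn\<^esub> y)
        = evalw K x_img u \<otimes> (C m \<otimes> evalw K x_img v \<otimes> C (- m)) \<otimes> (C m \<otimes> C j)"
      using u v n_pos by (simp add: Y.Hn_mult \<psi>_pc shift_words E.evalw_append evalw_shift C_add)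
    also have "\<dots> = \<psi> x \<otimes> \<psi> y"
      using u v by (simp add: \<psi>_pc m_assoc C_cancel)
    finally show "\<psi> (x \<otimes>\<^bsub>Y.Hn\<^esub> y) = \<psi> x \<otimes> \<psi> y" .
  qed
  then show ?thesis using that \<psi>_pc by blast
qed

section \<open>The isomorphisms\<close>

text \<open>LOG group = two-generator group: both presentations are satisfied by the
  corresponding elements of the other group, and the induced homomorphisms are
  inverse to each other on generators.\<close>
lemma (in LOG_params) LOG_AC_iso: "LOG_group n ps \<cong> AC_group n ps"
proof -
  let ?X = "LOG_gens n ps" and ?R = "LOG_rels n ps"
  let ?AG = "AC_group n ps" and ?q = "cls UNIV (AC_rels n ps)"
  interpret A: ac_model ?AG "?q (gen GA)" "?q (gen GC)" n ps
    using AC_ac_model n_pos p_bound by blast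
  interpret EA: word_eval ?AG A.log_img ?X by (rule A.log_img_eval)
  interpret EL: word_eval LG L.ac_img UNIV by (rule L.ac_img_eval)
  define h where "h = EA.induced ?R"
  define k where "k = EL.induced (AC_rels n ps)"
  have h: "h \<in> hom LG ?AG"
    unfolding h_def LOG_group_def using A.LOG_rels_hold by (intro EA.induced_hom)
  have k: "k \<in> hom ?AG LG"
    unfolding k_def AC_group_def using L.AC_rels_hold by (intro EL.induced_hom)
  have h_gen: "h (cl (gen x)) = A.log_img x" if "x \<in> ?X" for x
    unfolding h_def using EA.induced_cls[of ?R "gen x"] A.LOG_rels_hold that by simp
  have k_gen: "k (?q (gen x)) = L.ac_img x" for x
    unfolding k_def using EL.induced_cls[of "AC_rels n ps" "gen x"] L.AC_rels_hold by simp
  have k_log_img: "k (A.log_img x) = L.log_img x" for x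
    by (rule ac_word_hom_log_img[OF A.ac_word_axioms L.ac_word_axioms k])
      (simp_all add: k_gen L.ac_img_def)
  have "k (h g) = g" if "g \<in> carrier LG" for g
    using pres_group_left_inverse[OF A.group_axioms h[unfolded LOG_group_def]
        k[unfolded LOG_group_def] _ that[unfolded LOG_group_def]]
    by (simp add: h_gen k_log_img log_img_gen)
  moreover have "h (k g) = g" if "g \<in> carrier ?AG" for g
  proof -
    have "h (k (?q (gen x))) = ?q (gen x)" for x
      by (cases x) (simp_all add: k_gen L.ac_img_def h_gen A.log_img_def A.a_img_1 A.t_img_0)
    then show ?thesis
      using pres_group_left_inverse[OF L.group_axioms[unfolded LOG_group_def]
          k[unfolded AC_group_def LOG_group_def] h[unfolded AC_group_def LOG_group_def]] that
      unfolding AC_group_def by blast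
  qed
  ultimately show ?thesis
    by (rule iso_by_inverse[OF h k])
qed

text \<open>Two-generator group = G_n(w) x| Z: a |-> (x_0, 1), c |-> (1, 1), with inverse
  (g, m) |-> g(chi_0, ..., chi_(n-1)) c^m.\<close>
lemma AC_hnn_iso:
  assumes n: "1 \<le> n" and p: "\<forall>p\<in>set ps. p \<le> n - 1"
  shows "AC_group n ps \<cong> cyc_hnn n (cor_w n ps)"
proof -
  let ?AG = "AC_group n ps" and ?q = "cls UNIV (AC_rels n ps)"
  interpret Y: cyc_setting n "cor_w n ps" using n by unfold_locales simp
  interpret A: ac_model ?AG "?q (gen GA)" "?q (gen GC)" n ps using AC_ac_model[OF n p] .
  interpret H: ac_model Y.Hn Y.ah Y.th n ps using Hn_ac_model[OF n p] .
  interpret EH: word_eval Y.Hn H.ac_img UNIV by (rule H.ac_img_eval)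
  define h where "h = EH.induced (AC_rels n ps)"
  have h: "h \<in> hom ?AG Y.Hn"
    unfolding h_def AC_group_def using H.AC_rels_hold by (intro EH.induced_hom)
  have h_gen: "h (?q (gen x)) = H.ac_img x" for x
    unfolding h_def using EH.induced_cls[of "AC_rels n ps" "gen x"] H.AC_rels_hold by simp
  note h_pair = ac_pair_hom[OF A.ac_pair_axioms H.ac_pair_axioms h]
  obtain k where k: "k \<in> hom Y.Hn ?AG"
    and k_pc: "\<And>u m. u \<in> words {..<n} \<Longrightarrow> k (Y.pc u, m) = evalw ?AG A.x_img u \<otimes>\<^bsub>?AG\<^esub> A.C m"
    using A.hnn_hom by blast
  have ha: "h (?q (gen GA)) = Y.ah" and hc: "h (?q (gen GC)) = Y.th"
    by (simp_all add: h_gen H.ac_img_def)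
  have "k (h g) = g" if "g \<in> carrier ?AG" for g
  proof -
    have "k Y.ah = A.chi 0 \<otimes>\<^bsub>?AG\<^esub> A.C 1"
      using n word_eval.evalw_gen[OF A.x_img_eval[where X = UNIV]]
      by (simp add: Y.ah_def k_pc A.x_img_def)
    also have "\<dots> = ?q (gen GA)"
      using A.chi_step[of 0] by simp
    finally have "k (h (?q (gen x))) = ?q (gen x)" for x
      by (cases x) (simp_all add: ha hc Y.th_def k_pc A.C_1)
    then show ?thesis
      using pres_group_left_inverse[OF H.group_axioms h[unfolded AC_group_def] k[unfolded AC_group_def]] that
      unfolding AC_group_def by blast
  qed
  moreover have "h (k y) = y" if y: "y \<in> carrier Y.Hn" for y
  proof -
    obtain u m where u: "u \<in> words {..<n}" "y = (Y.pc u, m)"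
      using y unfolding Y.Hn_carrier by metis
    have "h (evalw ?AG A.x_img u) = evalw Y.Hn (\<lambda>j. h (A.x_img j)) u"
      using hom_evalw[OF A.x_img_eval H.group_axioms h u(1)] .
    also have "\<dots> = (Y.pc u, 0)"
      using u(1) by (simp add: A.x_img_def h_pair(2)[OF ha hc] Y.Hn_evalw_x_img flip: H.x_img_def)
    finally have "h (evalw ?AG A.x_img u) = (Y.pc u, 0)" .
    moreover have "h (evalw ?AG A.x_img u \<otimes>\<^bsub>?AG\<^esub> A.C m)
        = h (evalw ?AG A.x_img u) \<otimes>\<^bsub>Y.Hn\<^esub> h (A.C m)"
      using hom_mult[OF h] word_eval.evalw_closed[OF A.x_img_eval u(1)] by simp
    ultimately show ?thesis
      using u by (simp add: k_pc h_pair(1)[OF ha hc] Y.Hn_C Y.Hn_mult shift_0)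
  qed
  ultimately show ?thesis
    by (rule iso_by_inverse[OF h k])
qed

theorem corollary3p2:
  fixes n :: nat and ps :: "nat list"
  assumes "n \<ge> 1" and "length ps \<ge> 1" and "\<forall>p\<in>set ps. p \<le> n - 1"
  shows "LOG_group n ps \<cong> AC_group n ps \<and> LOG_group n ps \<cong> cyc_hnn n (cor_w n ps)"
proof -
  interpret LOG_params n ps using assms by unfold_locales
  have "LOG_group n ps \<cong> AC_group n ps" by (rule LOG_AC_iso)
  moreover have "AC_group n ps \<cong> cyc_hnn n (cor_w n ps)"
    using assms(1,3) by (rule AC_hnn_iso)
  ultimately show ?thesis using iso_trans by blast
qed

end
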